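(* Let $\Gamma$ be a discrete group, $\Lambda\le\Gamma$ a subgroup, and $V$ a $\Lambda$-injective operator system. Then $\ell^\infty(\Gamma/\Lambda,V)$, with the induced $\Gamma$-action, is $\Gamma$-injective.
   Context: Fix a cross-section $\pi\colon\Gamma/\Lambda\to\Gamma$ with $\pi(\Lambda)=e$, and let $h(x,g)=\pi(gx)^{-1}g\pi(x)\in\Lambda$ for $x\in\Gamma/\Lambda$, $g\in\Gamma$. The induced action on $\ell^\infty(\Gamma/\Lambda,V)$ is $(gf)(x)=h(g^{-1}x,g)f(g^{-1}x)$. A $G$-operator system $W$ is $G$-injective if for every inclusion of $G$-operator systems $W_1\subset W_2$, every $G$-equivariant unital completely positive map $W_1\to W$ extends to a $G$-equivariant unital completely positive map $W_2\to W$. *)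

theory Defs
  imports Complex_Main "HOL-Algebra.Left_Coset"
begin

text \<open>An operator system is represented abstractly: a carrier set inside an ambient type,
  complex vector space operations, an involution, an order unit and a family of matrix cones
  (positive n x n matrices, n >= 1). Matrices are functions nat => nat => 'a, padded by
  zero outside the index range {0..<n} x {0..<n}.\<close>

record 'a opsys =
  ocarrier :: "'a set"
  oadd :: "'a \<Rightarrow> 'a \<Rightarrow> 'a"
  osmul :: "complex \<Rightarrow> 'a \<Rightarrow> 'a"
  ozero :: 'a
  oadj :: "'a \<Rightarrow> 'a"
  ounit :: 'a
  opos :: "nat \<Rightarrow> (nat \<Rightarrow> nat \<Rightarrow> 'a) set"

primrec vsum :: "'a opsys \<Rightarrow> (nat \<Rightarrow> 'a) \<Rightarrow> nat \<Rightarrow> 'a" where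
  "vsum S f 0 = ozero S"
| "vsum S f (Suc n) = oadd S (vsum S f n) (f n)"

definition mats :: "'a opsys \<Rightarrow> nat \<Rightarrow> (nat \<Rightarrow> nat \<Rightarrow> 'a) set" where
  "mats S n = {X. (\<forall>i j. (i < n \<and> j < n \<longrightarrow> X i j \<in> ocarrier S)
                     \<and> (\<not> (i < n \<and> j < n) \<longrightarrow> X i j = ozero S))}"

definition mzero :: "'a opsys \<Rightarrow> nat \<Rightarrow> nat \<Rightarrow> 'a" where
  "mzero S = (\<lambda>i j. ozero S)"

definition madd :: "'a opsys \<Rightarrow> nat \<Rightarrow> (nat \<Rightarrow> nat \<Rightarrow> 'a) \<Rightarrow> (nat \<Rightarrow> nat \<Rightarrow> 'a) \<Rightarrow> nat \<Rightarrow> nat \<Rightarrow> 'a" where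
  "madd S n X Y = (\<lambda>i j. if i < n \<and> j < n then oadd S (X i j) (Y i j) else ozero S)"

definition msmul :: "'a opsys \<Rightarrow> nat \<Rightarrow> complex \<Rightarrow> (nat \<Rightarrow> nat \<Rightarrow> 'a) \<Rightarrow> nat \<Rightarrow> nat \<Rightarrow> 'a" where
  "msmul S n c X = (\<lambda>i j. if i < n \<and> j < n then osmul S c (X i j) else ozero S)"

definition madj :: "'a opsys \<Rightarrow> nat \<Rightarrow> (nat \<Rightarrow> nat \<Rightarrow> 'a) \<Rightarrow> nat \<Rightarrow> nat \<Rightarrow> 'a" where
  "madj S n X = (\<lambda>i j. if i < n \<and> j < n then oadj S (X j i) else ozero S)"

definition meye :: "'a opsys \<Rightarrow> nat \<Rightarrow> real \<Rightarrow> nat \<Rightarrow> nat \<Rightarrow> 'a" where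
  "meye S n r = (\<lambda>i j. if i < n \<and> j < n \<and> i = j then osmul S (complex_of_real r) (ounit S) else ozero S)"

definition mconj :: "'a opsys \<Rightarrow> (nat \<Rightarrow> nat \<Rightarrow> complex) \<Rightarrow> nat \<Rightarrow> nat \<Rightarrow> (nat \<Rightarrow> nat \<Rightarrow> 'a) \<Rightarrow> nat \<Rightarrow> nat \<Rightarrow> 'a" where
  "mconj S \<alpha> n m X = (\<lambda>k l. if k < m \<and> l < m then
      vsum S (\<lambda>i. vsum S (\<lambda>j. osmul S (cnj (\<alpha> i k) * \<alpha> j l) (X i j)) n) n else ozero S)"

definition operator_system :: "'a opsys \<Rightarrow> bool" where
  "operator_system S \<longleftrightarrow>
     ozero S \<in> ocarrier S \<and> ounit S \<in> ocarrier S
   \<and> (\<forall>x\<in>ocarrier S. \<forall>y\<in>ocarrier S. oadd S x y \<in> ocarrier S)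
   \<and> (\<forall>c. \<forall>x\<in>ocarrier S. osmul S c x \<in> ocarrier S)
   \<and> (\<forall>x\<in>ocarrier S. oadj S x \<in> ocarrier S)
   \<and> (\<forall>x\<in>ocarrier S. \<forall>y\<in>ocarrier S. \<forall>z\<in>ocarrier S. oadd S (oadd S x y) z = oadd S x (oadd S y z))
   \<and> (\<forall>x\<in>ocarrier S. \<forall>y\<in>ocarrier S. oadd S x y = oadd S y x)
   \<and> (\<forall>x\<in>ocarrier S. oadd S (ozero S) x = x)
   \<and> (\<forall>x\<in>ocarrier S. oadd S x (osmul S (-1) x) = ozero S)
   \<and> (\<forall>x\<in>ocarrier S. osmul S 1 x = x)
   \<and> (\<forall>a b. \<forall>x\<in>ocarrier S. osmul S a (osmul S b x) = osmul S (a * b) x)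
   \<and> (\<forall>a b. \<forall>x\<in>ocarrier S. osmul S (a + b) x = oadd S (osmul S a x) (osmul S b x))
   \<and> (\<forall>a. \<forall>x\<in>ocarrier S. \<forall>y\<in>ocarrier S. osmul S a (oadd S x y) = oadd S (osmul S a x) (osmul S a y))
   \<and> (\<forall>x\<in>ocarrier S. oadj S (oadj S x) = x)
   \<and> (\<forall>x\<in>ocarrier S. \<forall>y\<in>ocarrier S. oadj S (oadd S x y) = oadd S (oadj S x) (oadj S y))
   \<and> (\<forall>c. \<forall>x\<in>ocarrier S. oadj S (osmul S c x) = osmul S (cnj c) (oadj S x))
   \<and> oadj S (ounit S) = ounit S
   \<and> (\<forall>n>0. opos S n \<subseteq> mats S n)
   \<and> (\<forall>n>0. \<forall>X\<in>opos S n. madj S n X = X)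
   \<and> (\<forall>n>0. \<forall>X\<in>opos S n. \<forall>Y\<in>opos S n. madd S n X Y \<in> opos S n)
   \<and> (\<forall>n>0. \<forall>X\<in>opos S n. \<forall>r::real. r \<ge> 0 \<longrightarrow> msmul S n (complex_of_real r) X \<in> opos S n)
   \<and> (\<forall>n>0. \<forall>X\<in>opos S n. msmul S n (-1) X \<in> opos S n \<longrightarrow> X = mzero S)
   \<and> (\<forall>n>0. \<forall>m>0. \<forall>X\<in>opos S n. \<forall>\<alpha>. mconj S \<alpha> n m X \<in> opos S m)
   \<and> (\<forall>n>0. \<forall>X\<in>mats S n. madj S n X = X \<longrightarrow>
          (\<exists>r::real. r > 0 \<and> madd S n (meye S n r) X \<in> opos S n))
   \<and> (\<forall>n>0. \<forall>X\<in>mats S n. madj S n X = X \<longrightarrow>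
          (\<forall>r::real. r > 0 \<longrightarrow> madd S n (meye S n r) X \<in> opos S n) \<longrightarrow> X \<in> opos S n)"

definition mmap :: "'b opsys \<Rightarrow> nat \<Rightarrow> ('a \<Rightarrow> 'b) \<Rightarrow> (nat \<Rightarrow> nat \<Rightarrow> 'a) \<Rightarrow> nat \<Rightarrow> nat \<Rightarrow> 'b" where
  "mmap T n \<phi> X = (\<lambda>i j. if i < n \<and> j < n then \<phi> (X i j) else ozero T)"

definition ucp :: "'a opsys \<Rightarrow> 'b opsys \<Rightarrow> ('a \<Rightarrow> 'b) \<Rightarrow> bool" where
  "ucp S T \<phi> \<longleftrightarrow>
     (\<forall>x\<in>ocarrier S. \<phi> x \<in> ocarrier T)
   \<and> (\<forall>x\<in>ocarrier S. \<forall>y\<in>ocarrier S. \<phi> (oadd S x y) = oadd T (\<phi> x) (\<phi> y))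
   \<and> (\<forall>c. \<forall>x\<in>ocarrier S. \<phi> (osmul S c x) = osmul T c (\<phi> x))
   \<and> \<phi> (ounit S) = ounit T
   \<and> (\<forall>n>0. \<forall>X\<in>opos S n. mmap T n \<phi> X \<in> opos T n)"

definition subsystem :: "'a opsys \<Rightarrow> 'a opsys \<Rightarrow> bool" where
  "subsystem W1 W2 \<longleftrightarrow> ocarrier W1 \<subseteq> ocarrier W2
   \<and> oadd W1 = oadd W2 \<and> osmul W1 = osmul W2 \<and> ozero W1 = ozero W2
   \<and> oadj W1 = oadj W2 \<and> ounit W1 = ounit W2
   \<and> (\<forall>n>0. opos W1 n = opos W2 n \<inter> mats W1 n)"

text \<open>A G-operator system: G acts by unital complete order automorphisms (each act g is ucp;
  together with the action laws, act (inv g) is a ucp inverse).\<close>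
definition G_opsys :: "('g, 'm) monoid_scheme \<Rightarrow> 'a opsys \<Rightarrow> ('g \<Rightarrow> 'a \<Rightarrow> 'a) \<Rightarrow> bool" where
  "G_opsys G S act \<longleftrightarrow> operator_system S
   \<and> (\<forall>g\<in>carrier G. ucp S S (act g))
   \<and> (\<forall>x\<in>ocarrier S. act \<one>\<^bsub>G\<^esub> x = x)
   \<and> (\<forall>g\<in>carrier G. \<forall>h\<in>carrier G. \<forall>x\<in>ocarrier S. act (g \<otimes>\<^bsub>G\<^esub> h) x = act g (act h x))"

definition equivariant :: "('g, 'm) monoid_scheme \<Rightarrow> 'a opsys \<Rightarrow> ('g \<Rightarrow> 'a \<Rightarrow> 'a) \<Rightarrow> ('g \<Rightarrow> 'b \<Rightarrow> 'b) \<Rightarrow> ('a \<Rightarrow> 'b) \<Rightarrow> bool" where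
  "equivariant G S actS actT \<phi> \<longleftrightarrow> (\<forall>g\<in>carrier G. \<forall>x\<in>ocarrier S. \<phi> (actS g x) = actT g (\<phi> x))"

text \<open>G-injectivity, relative to G-operator systems W1 \<subseteq> W2 living in the ambient type 'w
  (HOL cannot quantify over types inside a formula; the type 'w is a parameter).\<close>
definition G_injective :: "('g, 'm) monoid_scheme \<Rightarrow> 'v opsys \<Rightarrow> ('g \<Rightarrow> 'v \<Rightarrow> 'v) \<Rightarrow> 'w itself \<Rightarrow> bool" where
  "G_injective G V actV (_ :: 'w itself) \<longleftrightarrow> G_opsys G V actV \<and>
     (\<forall>(W1 :: 'w opsys) W2 act \<phi>.
        G_opsys G W1 act \<and> G_opsys G W2 act \<and> subsystem W1 W2
        \<and> ucp W1 V \<phi> \<and> equivariant G W1 act actV \<phi>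
        \<longrightarrow> (\<exists>\<psi>. ucp W2 V \<psi> \<and> equivariant G W2 act actV \<psi> \<and> (\<forall>x\<in>ocarrier W1. \<psi> x = \<phi> x)))"

text \<open>Bounded: there is r with [[r e, v],[v^*, r e]] >= 0, i.e. norm of v is at most r.\<close>
definition bmat :: "'v opsys \<Rightarrow> real \<Rightarrow> 'v \<Rightarrow> nat \<Rightarrow> nat \<Rightarrow> 'v" where
  "bmat V r v = (\<lambda>i j. if i = 0 \<and> j = 0 then osmul V (complex_of_real r) (ounit V)
                  else if i = 0 \<and> j = 1 then v
                  else if i = 1 \<and> j = 0 then oadj V v
                  else if i = 1 \<and> j = 1 then osmul V (complex_of_real r) (ounit V)
                  else ozero V)"

text \<open>Gamma/Lambda is the set of left cosets g Lambda; functions are extended by 0 outside it.\<close>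
definition linf :: "('g, 'm) monoid_scheme \<Rightarrow> 'g set \<Rightarrow> 'v opsys \<Rightarrow> ('g set \<Rightarrow> 'v) opsys" where
  "linf G H V = \<lparr>
     ocarrier = {f. (\<forall>x\<in>lcosets\<^bsub>G\<^esub> H. f x \<in> ocarrier V)
                  \<and> (\<forall>x. x \<notin> lcosets\<^bsub>G\<^esub> H \<longrightarrow> f x = ozero V)
                  \<and> (\<exists>r::real. \<forall>x\<in>lcosets\<^bsub>G\<^esub> H. bmat V r (f x) \<in> opos V 2)},
     oadd = (\<lambda>f g x. oadd V (f x) (g x)),
     osmul = (\<lambda>c f x. osmul V c (f x)),
     ozero = (\<lambda>x. ozero V),
     oadj = (\<lambda>f x. oadj V (f x)),
     ounit = (\<lambda>x. if x \<in> lcosets\<^bsub>G\<^esub> H then ounit V else ozero V),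
     opos = (\<lambda>n. {F. (\<forall>i j. (i < n \<and> j < n \<longrightarrow>
                              F i j \<in> {f. (\<forall>x\<in>lcosets\<^bsub>G\<^esub> H. f x \<in> ocarrier V)
                                        \<and> (\<forall>x. x \<notin> lcosets\<^bsub>G\<^esub> H \<longrightarrow> f x = ozero V)
                                        \<and> (\<exists>r::real. \<forall>x\<in>lcosets\<^bsub>G\<^esub> H. bmat V r (f x) \<in> opos V 2)})
                            \<and> (\<not> (i < n \<and> j < n) \<longrightarrow> F i j = (\<lambda>x. ozero V)))
                     \<and> (\<forall>x\<in>lcosets\<^bsub>G\<^esub> H. (\<lambda>i j. F i j x) \<in> opos V n)})
   \<rparr>"

definition cocycle :: "('g, 'm) monoid_scheme \<Rightarrow> ('g set \<Rightarrow> 'g) \<Rightarrow> 'g set \<Rightarrow> 'g \<Rightarrow> 'g" where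
  "cocycle G \<pi> x g = inv\<^bsub>G\<^esub> (\<pi> (g <#\<^bsub>G\<^esub> x)) \<otimes>\<^bsub>G\<^esub> g \<otimes>\<^bsub>G\<^esub> \<pi> x"

definition ind_act :: "('g, 'm) monoid_scheme \<Rightarrow> 'g set \<Rightarrow> ('g set \<Rightarrow> 'g) \<Rightarrow> 'v opsys
                        \<Rightarrow> ('g \<Rightarrow> 'v \<Rightarrow> 'v) \<Rightarrow> 'g \<Rightarrow> ('g set \<Rightarrow> 'v) \<Rightarrow> 'g set \<Rightarrow> 'v" where
  "ind_act G H \<pi> V actV g f = (\<lambda>x. if x \<in> lcosets\<^bsub>G\<^esub> H then
       actV (cocycle G \<pi> (inv\<^bsub>G\<^esub> g <#\<^bsub>G\<^esub> x) g) (f (inv\<^bsub>G\<^esub> g <#\<^bsub>G\<^esub> x)) else ozero V)"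

end

theory Submission
  imports Defs "HOL-Algebra.FiniteProduct"
begin

(* Frobenius reciprocity: Gamma-equivariant ucp maps W -> l^oo(Gamma/Lambda, V) correspond to
   Lambda-equivariant ucp maps W -> V, by evaluating at the base coset Lambda, with inverse
   psi |-> (w |-> (x |-> psi (pi(x)^-1 w))); the cocycle identity h(x, g k) = h(k x, g) h(x, k)
   makes the inverse Gamma-equivariant. So the base component of a Gamma-equivariant ucp map on
   W1 <= W2 extends to W2 by Lambda-injectivity of V, and inducing the extension back extends
   the original map.

   Most of the work is in showing that l^oo(X, V) is an operator system. Its Archimedean axiom
   needs a uniform constant: a selfadjoint n x n matrix A whose entries have norm at most R
   satisfies n R 1 + A >= 0, because twice n R 1 + A is the sum over all (i, j) of the positive
   2 x 2 blocks [[R, a_ij], [a_ij^*, R]] placed at rows and columns i, j. *)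

locale osys =
  fixes S :: "'a opsys"
  assumes operator_system: "operator_system S"
begin

lemma
  zero_closed [simp]: "ozero S \<in> ocarrier S" and
  unit_closed [simp]: "ounit S \<in> ocarrier S" and
  add_closed [simp]: "x \<in> ocarrier S \<Longrightarrow> y \<in> ocarrier S \<Longrightarrow> oadd S x y \<in> ocarrier S" and
  smul_closed [simp]: "x \<in> ocarrier S \<Longrightarrow> osmul S c x \<in> ocarrier S" and
  adj_closed [simp]: "x \<in> ocarrier S \<Longrightarrow> oadj S x \<in> ocarrier S" and
  add_assoc: "x \<in> ocarrier S \<Longrightarrow> y \<in> ocarrier S \<Longrightarrow> z \<in> ocarrier S \<Longrightarrow>
    oadd S (oadd S x y) z = oadd S x (oadd S y z)" and
  add_commute: "x \<in> ocarrier S \<Longrightarrow> y \<in> ocarrier S \<Longrightarrow> oadd S x y = oadd S y x" and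
  zero_add [simp]: "x \<in> ocarrier S \<Longrightarrow> oadd S (ozero S) x = x" and
  add_neg: "x \<in> ocarrier S \<Longrightarrow> oadd S x (osmul S (-1) x) = ozero S" and
  smul_one [simp]: "x \<in> ocarrier S \<Longrightarrow> osmul S 1 x = x" and
  smul_smul [simp]: "x \<in> ocarrier S \<Longrightarrow> osmul S a (osmul S b x) = osmul S (a * b) x" and
  smul_add_left: "x \<in> ocarrier S \<Longrightarrow> osmul S (a + b) x = oadd S (osmul S a x) (osmul S b x)" and
  smul_add_right: "x \<in> ocarrier S \<Longrightarrow> y \<in> ocarrier S \<Longrightarrow>
    osmul S a (oadd S x y) = oadd S (osmul S a x) (osmul S a y)" and
  adj_adj [simp]: "x \<in> ocarrier S \<Longrightarrow> oadj S (oadj S x) = x" and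
  adj_add: "x \<in> ocarrier S \<Longrightarrow> y \<in> ocarrier S \<Longrightarrow> oadj S (oadd S x y) = oadd S (oadj S x) (oadj S y)" and
  adj_smul: "x \<in> ocarrier S \<Longrightarrow> oadj S (osmul S c x) = osmul S (cnj c) (oadj S x)" and
  adj_unit [simp]: "oadj S (ounit S) = ounit S" and
  pos_mats: "n > 0 \<Longrightarrow> X \<in> opos S n \<Longrightarrow> X \<in> mats S n" and
  pos_selfadjoint: "n > 0 \<Longrightarrow> X \<in> opos S n \<Longrightarrow> madj S n X = X" and
  pos_add: "n > 0 \<Longrightarrow> X \<in> opos S n \<Longrightarrow> Y \<in> opos S n \<Longrightarrow> madd S n X Y \<in> opos S n" and
  pos_smul: "n > 0 \<Longrightarrow> X \<in> opos S n \<Longrightarrow> r \<ge> 0 \<Longrightarrow> msmul S n (complex_of_real r) X \<in> opos S n" and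
  pos_antisym: "n > 0 \<Longrightarrow> X \<in> opos S n \<Longrightarrow> msmul S n (-1) X \<in> opos S n \<Longrightarrow> X = mzero S" and
  pos_mconj: "n > 0 \<Longrightarrow> m > 0 \<Longrightarrow> X \<in> opos S n \<Longrightarrow> mconj S \<alpha> n m X \<in> opos S m" and
  archimedean: "n > 0 \<Longrightarrow> X \<in> mats S n \<Longrightarrow> madj S n X = X \<Longrightarrow>
    \<exists>r::real. r > 0 \<and> madd S n (meye S n r) X \<in> opos S n" and
  pos_closed: "n > 0 \<Longrightarrow> X \<in> mats S n \<Longrightarrow> madj S n X = X \<Longrightarrow>
    (\<forall>r::real. r > 0 \<longrightarrow> madd S n (meye S n r) X \<in> opos S n) \<Longrightarrow> X \<in> opos S n"
  using operator_system unfolding operator_system_def by (metis subsetD)+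

lemma add_zero [simp]: "x \<in> ocarrier S \<Longrightarrow> oadd S x (ozero S) = x"
  using add_commute[of x "ozero S"] by simp

lemma smul_zero [simp]: assumes x: "x \<in> ocarrier S" shows "osmul S 0 x = ozero S"
proof -
  define a where "a = osmul S 0 x"
  have a: "a \<in> ocarrier S" using x by (simp add: a_def)
  have "a = oadd S a a" using smul_add_left[OF x, of 0 0] by (simp add: a_def)
  hence "oadd S a (osmul S (-1) a) = oadd S (oadd S a a) (osmul S (-1) a)" by simp
  also have "\<dots> = oadd S a (oadd S a (osmul S (-1) a))" using a by (simp add: add_assoc)
  finally show ?thesis using a by (simp add: add_neg a_def)
qed

lemma smul_ozero [simp]: "osmul S c (ozero S) = ozero S"
  using smul_smul[of "ozero S" c 0] smul_zero[of "ozero S"] by simp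

lemma adj_zero [simp]: "oadj S (ozero S) = ozero S"
  using adj_smul[of "ozero S" 0] by simp

lemma pos_in_carrier: "X \<in> opos S n \<Longrightarrow> i < n \<Longrightarrow> j < n \<Longrightarrow> X i j \<in> ocarrier S"
  using pos_mats[of n X] by (simp add: mats_def)

lemma exists_meye_pos: "n > 0 \<Longrightarrow> \<exists>r>0. meye S n r \<in> opos S n"
proof -
  assume n: "n > 0"
  have "madd S n (meye S n r) (mzero S) = meye S n r" for r
    by (intro ext) (auto simp: madd_def meye_def mzero_def)
  moreover have "madj S n (mzero S) = mzero S"
    by (intro ext) (auto simp: madj_def mzero_def)
  ultimately show ?thesis
    using archimedean[OF n, of "mzero S"] by (simp add: mats_def mzero_def)
qed

lemma msmul_meye: "msmul S n (complex_of_real a) (meye S n b) = meye S n (a * b)"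
  by (intro ext) (auto simp: msmul_def meye_def)

lemma meye_pos: assumes n: "n > 0" and t: "t \<ge> 0" shows "meye S n t \<in> opos S n"
proof -
  obtain r where r: "r > 0" "meye S n r \<in> opos S n" using exists_meye_pos[OF n] by blast
  have "msmul S n (complex_of_real (t / r)) (meye S n r) \<in> opos S n"
    using pos_smul[OF n r(2), of "t / r"] r(1) t by (simp del: of_real_divide)
  thus ?thesis using r(1) by (simp add: msmul_meye del: of_real_divide)
qed

lemma mzero_pos: assumes n: "n > 0" shows "mzero S \<in> opos S n"
proof -
  have "msmul S n (complex_of_real 0) (meye S n 0) = mzero S"
    by (intro ext) (auto simp: msmul_def meye_def mzero_def)
  thus ?thesis using pos_smul[OF n meye_pos[OF n order_refl], of 0] by simp
qed

lemma madd_meye_meye: "X \<in> mats S n \<Longrightarrow>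
    madd S n (meye S n a) (madd S n (meye S n b) X) = madd S n (meye S n (a + b)) X"
  by (intro ext) (auto simp: madd_def meye_def mats_def smul_add_left add_assoc)

lemma madd_meye_pos_mono:
  assumes n: "n > 0" and X: "X \<in> mats S n" and pos: "madd S n (meye S n r) X \<in> opos S n"
    and "r \<le> r'"
  shows "madd S n (meye S n r') X \<in> opos S n"
proof -
  have "madd S n (meye S n (r' - r)) (madd S n (meye S n r) X) \<in> opos S n"
    using pos_add[OF n meye_pos[OF n] pos] \<open>r \<le> r'\<close> by simp
  thus ?thesis using madd_meye_meye[OF X] by simp
qed

lemma vsum_two: "vsum S f 2 = oadd S (oadd S (ozero S) (f 0)) (f 1)"
  by (simp add: numeral_2_eq_2)

lemma bmat_eq_madd_meye: "x \<in> ocarrier S \<Longrightarrow>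
    bmat S R x = madd S 2 (meye S 2 R)
      (\<lambda>i j. if i = 0 \<and> j = 1 then x else if i = 1 \<and> j = 0 then oadj S x else ozero S)"
  by (intro ext) (auto simp: madd_def meye_def bmat_def)

lemma bmat_mono:
  assumes x: "x \<in> ocarrier S" and "bmat S R x \<in> opos S 2" and "R \<le> R'"
  shows "bmat S R' x \<in> opos S 2"
  using madd_meye_pos_mono[of 2 _ R R'] assms bmat_eq_madd_meye[OF x] by (simp add: mats_def)

lemma bmat_exists: assumes x: "x \<in> ocarrier S" shows "\<exists>R. bmat S R x \<in> opos S 2"
proof -
  define Y where "Y = (\<lambda>(i::nat) (j::nat). if i = 0 \<and> j = 1 then x else if i = 1 \<and> j = 0 then oadj S x else ozero S)"
  have "Y \<in> mats S 2" using x by (simp add: Y_def mats_def)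
  moreover have "madj S 2 Y = Y" using x by (intro ext) (auto simp: Y_def madj_def)
  ultimately obtain r where "madd S 2 (meye S 2 r) Y \<in> opos S 2" using archimedean[of 2 Y] by auto
  moreover have "bmat S r x = madd S 2 (meye S 2 r) Y"
    unfolding Y_def by (rule bmat_eq_madd_meye[OF x])
  ultimately show ?thesis by metis
qed

lemma bmat_add:
  assumes "x \<in> ocarrier S" "y \<in> ocarrier S" "bmat S R1 x \<in> opos S 2" "bmat S R2 y \<in> opos S 2"
  shows "bmat S (R1 + R2) (oadd S x y) \<in> opos S 2"
proof -
  have "madd S 2 (bmat S R1 x) (bmat S R2 y) = bmat S (R1 + R2) (oadd S x y)"
    using assms(1,2) by (intro ext) (auto simp: madd_def bmat_def smul_add_left adj_add)
  thus ?thesis using pos_add[of 2, OF _ assms(3,4)] by simp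
qed

lemma bmat_adj:
  assumes "x \<in> ocarrier S" "bmat S R x \<in> opos S 2"
  shows "bmat S R (oadj S x) \<in> opos S 2"
proof -
  define \<alpha> where "\<alpha> = (\<lambda>(a::nat) (k::nat). if (a = 0 \<and> k = 1) \<or> (a = 1 \<and> k = 0) then 1 else (0::complex))"
  have "mconj S \<alpha> 2 2 (bmat S R x) = bmat S R (oadj S x)"
    using assms(1) by (intro ext) (auto simp: mconj_def vsum_two bmat_def \<alpha>_def)
  thus ?thesis using pos_mconj[of 2 2 _ \<alpha>, OF _ _ assms(2)] by simp
qed

lemma bmat_smul:
  assumes "x \<in> ocarrier S" "bmat S R x \<in> opos S 2"
  shows "bmat S (cmod c * R) (osmul S c x) \<in> opos S 2"
proof -
  \<comment> \<open>conjugate by diag(p, q) with p = sqrt |c| and cnj p * q = c\<close>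
  define p where "p = complex_of_real (sqrt (cmod c))"
  define q where "q = c / p"
  have pp: "cnj p * p = complex_of_real (cmod c)"
    by (simp add: p_def flip: of_real_mult)
  have qq: "cnj q * q = complex_of_real (cmod c)"
  proof (cases "c = 0")
    case False
    have "cnj q * q = (cnj c * c) / (cnj p * p)" by (simp add: q_def p_def)
    also have "cnj c * c = complex_of_real (cmod c ^ 2)"
      using complex_norm_square[of c] by (simp add: mult.commute)
    finally show ?thesis using pp False by (simp add: power2_eq_square flip: of_real_mult of_real_divide)
  qed (simp add: q_def)
  have pq: "cnj p * q = c"
    by (cases "c = 0") (simp_all add: q_def p_def)
  have qp: "cnj q * p = cnj c"
    using pq by (metis complex_cnj_cnj complex_cnj_mult mult.commute)
  define \<alpha> where "\<alpha> = (\<lambda>(a::nat) (k::nat). if a = 0 \<and> k = 0 then p else if a = 1 \<and> k = 1 then q else (0::complex))"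
  have "mconj S \<alpha> 2 2 (bmat S R x) = bmat S (cmod c * R) (osmul S c x)"
    using assms(1) pp qq pq qp
    by (intro ext) (auto simp: mconj_def vsum_two bmat_def \<alpha>_def adj_smul mult.commute)
  thus ?thesis using pos_mconj[of 2 2 _ \<alpha>, OF _ _ assms(2)] by simp
qed

end

lemma ucp_closed: "ucp S T \<phi> \<Longrightarrow> x \<in> ocarrier S \<Longrightarrow> \<phi> x \<in> ocarrier T"
  and ucp_add: "ucp S T \<phi> \<Longrightarrow> x \<in> ocarrier S \<Longrightarrow> y \<in> ocarrier S \<Longrightarrow> \<phi> (oadd S x y) = oadd T (\<phi> x) (\<phi> y)"
  and ucp_smul: "ucp S T \<phi> \<Longrightarrow> x \<in> ocarrier S \<Longrightarrow> \<phi> (osmul S c x) = osmul T c (\<phi> x)"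
  and ucp_unit: "ucp S T \<phi> \<Longrightarrow> \<phi> (ounit S) = ounit T"
  and ucp_pos: "ucp S T \<phi> \<Longrightarrow> n > 0 \<Longrightarrow> X \<in> opos S n \<Longrightarrow> mmap T n \<phi> X \<in> opos T n"
  by (simp_all add: ucp_def)

lemma ucp_bmat:
  assumes S: "osys S" and T: "osys T" and \<phi>: "ucp S T \<phi>"
    and x: "x \<in> ocarrier S" and R: "bmat S R x \<in> opos S 2"
  shows "bmat T R (\<phi> x) \<in> opos T 2"
proof -
  define M where "M = mmap T 2 \<phi> (bmat S R x)"
  have M: "M \<in> opos T 2" using ucp_pos[OF \<phi> _ R] by (simp add: M_def)
  have "madj T 2 M 1 0 = M 1 0" using osys.pos_selfadjoint[OF T _ M] by simp
  hence "oadj T (\<phi> x) = \<phi> (oadj S x)" by (simp add: M_def madj_def mmap_def bmat_def)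
  hence "M = bmat T R (\<phi> x)"
    using ucp_smul[OF \<phi>] ucp_unit[OF \<phi>] osys.unit_closed[OF S]
    by (intro ext) (auto simp: M_def mmap_def bmat_def)
  thus ?thesis using M by simp
qed

lemma G_opsys_osys: "G_opsys G S act \<Longrightarrow> osys S"
  and G_opsys_ucp: "G_opsys G S act \<Longrightarrow> g \<in> carrier G \<Longrightarrow> ucp S S (act g)"
  and G_opsys_one: "G_opsys G S act \<Longrightarrow> x \<in> ocarrier S \<Longrightarrow> act \<one>\<^bsub>G\<^esub> x = x"
  and G_opsys_mult: "G_opsys G S act \<Longrightarrow> g \<in> carrier G \<Longrightarrow> h \<in> carrier G \<Longrightarrow> x \<in> ocarrier S \<Longrightarrow>
    act (g \<otimes>\<^bsub>G\<^esub> h) x = act g (act h x)"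
  by (simp_all add: G_opsys_def osys_def)

lemma G_opsys_restrict:
  "G_opsys G S act \<Longrightarrow> H \<subseteq> carrier G \<Longrightarrow> G_opsys (G\<lparr>carrier := H\<rparr>) S act"
  unfolding G_opsys_def by (simp add: subset_iff)

section \<open>Finite sums of positive matrices\<close>

definition add_monoid :: "'a opsys \<Rightarrow> 'a monoid" where
  "add_monoid S = \<lparr>carrier = ocarrier S, mult = oadd S, one = ozero S\<rparr>"

lemma add_monoid_simps [simp]:
  "carrier (add_monoid S) = ocarrier S" "mult (add_monoid S) = oadd S" "one (add_monoid S) = ozero S"
  by (simp_all add: add_monoid_def)

sublocale osys \<subseteq> osum: comm_monoid "add_monoid S"
  by unfold_locales (auto simp: add_assoc intro: add_commute)

definition msum ::
    "'a opsys \<Rightarrow> nat \<Rightarrow> ('p \<Rightarrow> nat \<Rightarrow> nat \<Rightarrow> 'a) \<Rightarrow> 'p set \<Rightarrow> nat \<Rightarrow> nat \<Rightarrow> 'a" where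
  "msum S n P A =
    (\<lambda>k l. if k < n \<and> l < n then finprod (add_monoid S) (\<lambda>p. P p k l) A else ozero S)"

text \<open>Conjugating a 2 x 2 matrix by this 2 x n scalar matrix places it at rows and columns i, j.\<close>
definition block_embedding :: "nat \<Rightarrow> nat \<Rightarrow> nat \<Rightarrow> nat \<Rightarrow> complex" where
  "block_embedding i j = (\<lambda>a k. if (a = 0 \<and> k = i) \<or> (a = 1 \<and> k = j) then 1 else 0)"

context osys
begin

lemma msum_pos:
  assumes "finite A" and n: "n > 0" and "\<forall>p\<in>A. P p \<in> opos S n"
  shows "msum S n P A \<in> opos S n"
  using assms(1,3)
proof (induction A rule: finite_induct)
  case empty
  have "msum S n P {} = mzero S" by (intro ext) (simp add: msum_def mzero_def)
  then show ?case using mzero_pos[OF n] by simp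
next
  case (insert a F)
  have "msum S n P (insert a F) = madd S n (P a) (msum S n P F)"
  proof (intro ext)
    fix k l
    show "msum S n P (insert a F) k l = madd S n (P a) (msum S n P F) k l"
    proof (cases "k < n \<and> l < n")
      case True
      have "(\<lambda>p. P p k l) \<in> F \<rightarrow> ocarrier S" "P a k l \<in> ocarrier S"
        using insert.prems True pos_in_carrier by blast+
      with True insert.hyps show ?thesis by (simp add: msum_def madd_def osum.finprod_insert)
    qed (auto simp: msum_def madd_def)
  qed
  then show ?case using pos_add[OF n] insert by simp
qed

lemma add_pow_eq_smul: "x \<in> ocarrier S \<Longrightarrow> x [^]\<^bsub>add_monoid S\<^esub> (m::nat) = osmul S (of_nat m) x"
  by (induction m) (simp_all add: smul_add_left add_commute)

lemma finprod_single:
  assumes "finite A" "q \<in> A" "f \<in> A \<rightarrow> ocarrier S"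
  shows "finprod (add_monoid S) (\<lambda>p. if p = q then f p else ozero S) A = f q"
  using osum.finprod_singleton_swap[of q A f, unfolded add_monoid_simps] assms by simp

lemma finprod_diagonal_fst:
  assumes k: "k < n" and e: "e \<in> ocarrier S"
  shows "finprod (add_monoid S) (\<lambda>p. if k = fst p \<and> l = fst p then e else ozero S) ({..<n} \<times> {..<n})
    = (if k = l then osmul S (of_nat n) e else ozero S)"
proof (cases "k = l")
  case True
  have "finprod (add_monoid S) (\<lambda>p. e) ({k} \<times> {..<n})
      = finprod (add_monoid S) (\<lambda>p. if k = fst p \<and> l = fst p then e else ozero S) ({..<n} \<times> {..<n})"
    by (rule osum.finprod_mono_neutral_cong_left) (use k e True in auto)
  moreover have "finprod (add_monoid S) (\<lambda>p. e) ({k} \<times> {..<n}) = e [^]\<^bsub>add_monoid S\<^esub> n"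
    using osum.finprod_const[of e "{k} \<times> {..<n}"] e by (simp add: card_cartesian_product)
  ultimately show ?thesis using add_pow_eq_smul[OF e] True by simp
next
  case False
  then have "finprod (add_monoid S) (\<lambda>p. if k = fst p \<and> l = fst p then e else ozero S) ({..<n} \<times> {..<n})
      = \<one>\<^bsub>add_monoid S\<^esub>"
    by (intro osum.finprod_one_eqI) auto
  with False show ?thesis by simp
qed

lemma finprod_diagonal_snd:
  assumes k: "k < n" and e: "e \<in> ocarrier S"
  shows "finprod (add_monoid S) (\<lambda>p. if k = snd p \<and> l = snd p then e else ozero S) ({..<n} \<times> {..<n})
    = (if k = l then osmul S (of_nat n) e else ozero S)"
proof -
  have "finprod (add_monoid S) (\<lambda>p. if k = snd p \<and> l = snd p then e else ozero S) ({..<n} \<times> {..<n})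
      = finprod (add_monoid S) (\<lambda>p. if k = fst p \<and> l = fst p then e else ozero S) ({..<n} \<times> {..<n})"
    using osum.finprod_reindex[of "\<lambda>p. if k = fst p \<and> l = fst p then e else ozero S" prod.swap
        "{..<n} \<times> {..<n}"] e
    by (simp add: product_swap comp_def)
  with finprod_diagonal_fst[OF k e] show ?thesis by simp
qed

lemma mconj_block_embedding_bmat:
  assumes "x \<in> ocarrier S" "k < n" "l < n"
  shows "mconj S (block_embedding i j) 2 n (bmat S R x) k l =
    oadd S (oadd S (if k = i \<and> l = i then osmul S (complex_of_real R) (ounit S) else ozero S)
                   (if k = i \<and> l = j then x else ozero S))
           (oadd S (if k = j \<and> l = i then oadj S x else ozero S)
                   (if k = j \<and> l = j then osmul S (complex_of_real R) (ounit S) else ozero S))"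
  using assms by (simp add: mconj_def vsum_two bmat_def block_embedding_def)

lemma msum_block_bmat_entry:
  assumes X: "X \<in> mats S n" and sa: "madj S n X = X" and kl: "k < n" "l < n"
  shows "msum S n (\<lambda>p. mconj S (block_embedding (fst p) (snd p)) 2 n (bmat S R (X (fst p) (snd p))))
      ({..<n} \<times> {..<n}) k l
    = oadd S (oadd S (meye S n (real n * R) k l) (X k l)) (oadd S (X k l) (meye S n (real n * R) k l))"
proof -
  define A where "A = {..<n} \<times> {..<n}"
  define e where "e = osmul S (complex_of_real R) (ounit S)"
  have e: "e \<in> ocarrier S" by (simp add: e_def)
  have Xc: "\<And>i j. i < n \<Longrightarrow> j < n \<Longrightarrow> X i j \<in> ocarrier S" using X by (simp add: mats_def)
  have Xadj: "oadj S (X l k) = X k l"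
    using fun_cong[OF fun_cong[OF sa, of k], of l] kl by (simp add: madj_def)
  define t1 where "t1 = (\<lambda>p::nat \<times> nat. if k = fst p \<and> l = fst p then e else ozero S)"
  define t2 where "t2 = (\<lambda>p::nat \<times> nat. if p = (k, l) then X (fst p) (snd p) else ozero S)"
  define t3 where "t3 = (\<lambda>p::nat \<times> nat. if p = (l, k) then oadj S (X (fst p) (snd p)) else ozero S)"
  define t4 where "t4 = (\<lambda>p::nat \<times> nat. if k = snd p \<and> l = snd p then e else ozero S)"
  have t: "t1 \<in> A \<rightarrow> ocarrier S" "t2 \<in> A \<rightarrow> ocarrier S" "t3 \<in> A \<rightarrow> ocarrier S" "t4 \<in> A \<rightarrow> ocarrier S"
    using e Xc by (auto simp: t1_def t2_def t3_def t4_def A_def)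
  have "msum S n (\<lambda>p. mconj S (block_embedding (fst p) (snd p)) 2 n (bmat S R (X (fst p) (snd p)))) A k l
      = finprod (add_monoid S) (\<lambda>p. oadd S (oadd S (t1 p) (t2 p)) (oadd S (t3 p) (t4 p))) A"
    unfolding msum_def using kl t
    by (auto intro!: osum.finprod_cong' simp: A_def mconj_block_embedding_bmat Xc t1_def t2_def t3_def t4_def e_def)
  also have "\<dots> = oadd S (oadd S (finprod (add_monoid S) t1 A) (finprod (add_monoid S) t2 A))
                         (oadd S (finprod (add_monoid S) t3 A) (finprod (add_monoid S) t4 A))"
    using osum.finprod_multf[of "\<lambda>p. oadd S (t1 p) (t2 p)" A "\<lambda>p. oadd S (t3 p) (t4 p)"]
      osum.finprod_multf[of t1 A t2] osum.finprod_multf[of t3 A t4] t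
    by (auto simp: Pi_def)
  also have "finprod (add_monoid S) t1 A = meye S n (real n * R) k l"
    using finprod_diagonal_fst[OF kl(1) e, of l] kl by (simp add: t1_def A_def meye_def e_def)
  also have "finprod (add_monoid S) t4 A = meye S n (real n * R) k l"
    using finprod_diagonal_snd[OF kl(1) e, of l] kl by (simp add: t4_def A_def meye_def e_def)
  also have "finprod (add_monoid S) t2 A = X k l"
    using finprod_single[of A "(k, l)" "\<lambda>p. X (fst p) (snd p)"] kl Xc by (auto simp: t2_def A_def Pi_def)
  also have "finprod (add_monoid S) t3 A = X k l"
    using finprod_single[of A "(l, k)" "\<lambda>p. oadj S (X (fst p) (snd p))"] kl Xc Xadj
    by (auto simp: t3_def A_def Pi_def)
  finally show ?thesis by (simp add: A_def)
qed

lemma smul_half_double: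
  assumes "a \<in> ocarrier S" "b \<in> ocarrier S"
  shows "osmul S (1/2) (oadd S (oadd S a b) (oadd S b a)) = oadd S a b"
proof -
  have "oadd S (oadd S a b) (oadd S a b) = osmul S 2 (oadd S a b)"
    using assms smul_add_left[of "oadd S a b" 1 1] by simp
  then show ?thesis using assms add_commute[of b a] by simp
qed

lemma meye_add_pos_of_bounded_entries:
  assumes n: "n > 0" and X: "X \<in> mats S n" and sa: "madj S n X = X"
    and bounded: "\<And>i j. i < n \<Longrightarrow> j < n \<Longrightarrow> bmat S R (X i j) \<in> opos S 2"
  shows "madd S n (meye S n (real n * R)) X \<in> opos S n"
proof -
  define Q where "Q = (\<lambda>p. mconj S (block_embedding (fst p) (snd p)) 2 n (bmat S R (X (fst p) (snd p))))"
  have "msum S n Q ({..<n} \<times> {..<n}) \<in> opos S n"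
    using bounded n by (intro msum_pos) (auto simp: Q_def intro!: pos_mconj[OF _ n])
  moreover have "msmul S n (complex_of_real (1/2)) (msum S n Q ({..<n} \<times> {..<n}))
      = madd S n (meye S n (real n * R)) X"
  proof (intro ext)
    fix k l
    show "msmul S n (complex_of_real (1/2)) (msum S n Q ({..<n} \<times> {..<n})) k l
        = madd S n (meye S n (real n * R)) X k l"
    proof (cases "k < n \<and> l < n")
      case True
      have "meye S n (real n * R) k l \<in> ocarrier S" "X k l \<in> ocarrier S"
        using X True by (simp_all add: meye_def mats_def)
      with True show ?thesis
        using msum_block_bmat_entry[OF X sa, of k l R]
        by (simp add: Q_def msmul_def madd_def smul_half_double)
    qed (auto simp: msmul_def madd_def)
  qed
  ultimately show ?thesis using pos_smul[OF n, of _ "1/2"] by fastforce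
qed

end

section \<open>Bounded functions with values in an operator system\<close>

definition ell_inf_carrier :: "'i set \<Rightarrow> 'v opsys \<Rightarrow> ('i \<Rightarrow> 'v) set" where
  "ell_inf_carrier X V = {f. (\<forall>x\<in>X. f x \<in> ocarrier V) \<and> (\<forall>x. x \<notin> X \<longrightarrow> f x = ozero V)
                          \<and> (\<exists>r::real. \<forall>x\<in>X. bmat V r (f x) \<in> opos V 2)}"

definition ell_inf :: "'i set \<Rightarrow> 'v opsys \<Rightarrow> ('i \<Rightarrow> 'v) opsys" where
  "ell_inf X V = \<lparr>
     ocarrier = ell_inf_carrier X V,
     oadd = (\<lambda>f g x. oadd V (f x) (g x)),
     osmul = (\<lambda>c f x. osmul V c (f x)),
     ozero = (\<lambda>x. ozero V),
     oadj = (\<lambda>f x. oadj V (f x)),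
     ounit = (\<lambda>x. if x \<in> X then ounit V else ozero V),
     opos = (\<lambda>n. {F. (\<forall>i j. (i < n \<and> j < n \<longrightarrow> F i j \<in> ell_inf_carrier X V)
                            \<and> (\<not> (i < n \<and> j < n) \<longrightarrow> F i j = (\<lambda>x. ozero V)))
                     \<and> (\<forall>x\<in>X. (\<lambda>i j. F i j x) \<in> opos V n)})\<rparr>"

lemma linf_eq_ell_inf: "linf G H V = ell_inf (lcosets\<^bsub>G\<^esub> H) V"
  by (simp add: linf_def ell_inf_def ell_inf_carrier_def)

lemma ell_inf_simps [simp]:
  "ocarrier (ell_inf X V) = ell_inf_carrier X V"
  "oadd (ell_inf X V) = (\<lambda>f g x. oadd V (f x) (g x))"
  "osmul (ell_inf X V) = (\<lambda>c f x. osmul V c (f x))"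
  "ozero (ell_inf X V) = (\<lambda>x. ozero V)"
  "oadj (ell_inf X V) = (\<lambda>f x. oadj V (f x))"
  "ounit (ell_inf X V) = (\<lambda>x. if x \<in> X then ounit V else ozero V)"
  by (simp_all add: ell_inf_def)

lemma opos_ell_inf:
  "opos (ell_inf X V) n = {F. F \<in> mats (ell_inf X V) n \<and> (\<forall>x\<in>X. (\<lambda>i j. F i j x) \<in> opos V n)}"
  by (simp add: ell_inf_def mats_def)

lemma vsum_ell_inf: "vsum (ell_inf X V) f m x = vsum V (\<lambda>i. f i x) m"
  by (induction m) auto

lemma ell_inf_eval_madd:
  "(\<lambda>i j. madd (ell_inf X V) n F K i j x) = madd V n (\<lambda>i j. F i j x) (\<lambda>i j. K i j x)"
  by (intro ext) (simp add: madd_def)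

lemma ell_inf_eval_msmul: "(\<lambda>i j. msmul (ell_inf X V) n c F i j x) = msmul V n c (\<lambda>i j. F i j x)"
  by (intro ext) (simp add: msmul_def)

lemma ell_inf_eval_madj: "(\<lambda>i j. madj (ell_inf X V) n F i j x) = madj V n (\<lambda>i j. F i j x)"
  by (intro ext) (simp add: madj_def)

lemma ell_inf_eval_mconj: "(\<lambda>i j. mconj (ell_inf X V) \<alpha> n m F i j x) = mconj V \<alpha> n m (\<lambda>i j. F i j x)"
  by (intro ext) (simp add: mconj_def vsum_ell_inf)

lemma ell_inf_eval_meye: "x \<in> X \<Longrightarrow> (\<lambda>i j. meye (ell_inf X V) n r i j x) = meye V n r"
  by (intro ext) (simp add: meye_def)

lemma ell_inf_mats_in: "F \<in> mats (ell_inf X V) n \<Longrightarrow> i < n \<Longrightarrow> j < n \<Longrightarrow> F i j \<in> ell_inf_carrier X V"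
  and ell_inf_mats_out: "F \<in> mats (ell_inf X V) n \<Longrightarrow> \<not> (i < n \<and> j < n) \<Longrightarrow> F i j = (\<lambda>x. ozero V)"
  by (simp_all add: mats_def)

context osys
begin

lemma ell_inf_carrier_val: "f \<in> ell_inf_carrier X S \<Longrightarrow> f x \<in> ocarrier S"
  by (cases "x \<in> X") (auto simp: ell_inf_carrier_def)

lemma ell_inf_carrier_bmat: "f \<in> ell_inf_carrier X S \<Longrightarrow> \<exists>r. \<forall>x\<in>X. bmat S r (f x) \<in> opos S 2"
  by (simp add: ell_inf_carrier_def)

lemma ell_inf_carrier_out: "f \<in> ell_inf_carrier X S \<Longrightarrow> x \<notin> X \<Longrightarrow> f x = ozero S"
  by (simp add: ell_inf_carrier_def)

lemma ell_inf_carrierI: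
  assumes "\<And>x. x \<in> X \<Longrightarrow> f x \<in> ocarrier S" "\<And>x. x \<notin> X \<Longrightarrow> f x = ozero S"
    and "\<And>x. x \<in> X \<Longrightarrow> bmat S r (f x) \<in> opos S 2"
  shows "f \<in> ell_inf_carrier X S"
  using assms unfolding ell_inf_carrier_def by blast

lemma ell_inf_zero_closed: "(\<lambda>x. ozero S) \<in> ell_inf_carrier X S"
  using bmat_exists[of "ozero S"] by (auto intro: ell_inf_carrierI)

lemma ell_inf_unit_closed: "(\<lambda>x. if x \<in> X then ounit S else ozero S) \<in> ell_inf_carrier X S"
  using bmat_exists[of "ounit S"] by (auto intro: ell_inf_carrierI)

lemma ell_inf_add_closed:
  assumes f: "f \<in> ell_inf_carrier X S" and g: "g \<in> ell_inf_carrier X S"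
  shows "(\<lambda>x. oadd S (f x) (g x)) \<in> ell_inf_carrier X S"
proof -
  obtain r1 where r1: "\<forall>x\<in>X. bmat S r1 (f x) \<in> opos S 2" using ell_inf_carrier_bmat[OF f] by blast
  obtain r2 where r2: "\<forall>x\<in>X. bmat S r2 (g x) \<in> opos S 2" using ell_inf_carrier_bmat[OF g] by blast
  show ?thesis
    using ell_inf_carrier_val[OF f] ell_inf_carrier_val[OF g] ell_inf_carrier_out[OF f]
      ell_inf_carrier_out[OF g] r1 r2
    by (intro ell_inf_carrierI[where r = "r1 + r2"]) (auto intro: bmat_add)
qed

lemma ell_inf_smul_closed:
  assumes f: "f \<in> ell_inf_carrier X S"
  shows "(\<lambda>x. osmul S c (f x)) \<in> ell_inf_carrier X S"
proof -
  obtain r where r: "\<forall>x\<in>X. bmat S r (f x) \<in> opos S 2" using ell_inf_carrier_bmat[OF f] by blast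
  show ?thesis
    using ell_inf_carrier_val[OF f] ell_inf_carrier_out[OF f] r
    by (intro ell_inf_carrierI[where r = "cmod c * r"]) (auto intro: bmat_smul)
qed

lemma ell_inf_adj_closed:
  assumes f: "f \<in> ell_inf_carrier X S"
  shows "(\<lambda>x. oadj S (f x)) \<in> ell_inf_carrier X S"
proof -
  obtain r where r: "\<forall>x\<in>X. bmat S r (f x) \<in> opos S 2" using ell_inf_carrier_bmat[OF f] by blast
  show ?thesis
    using ell_inf_carrier_val[OF f] ell_inf_carrier_out[OF f] r
    by (intro ell_inf_carrierI[where r = r]) (auto intro: bmat_adj)
qed

lemma vsum_ell_inf_closed:
  "(\<And>i. i < m \<Longrightarrow> f i \<in> ell_inf_carrier X S) \<Longrightarrow> vsum (ell_inf X S) f m \<in> ell_inf_carrier X S"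
  by (induction m) (simp_all add: ell_inf_zero_closed ell_inf_add_closed)

lemma ell_inf_mats_eval: "F \<in> mats (ell_inf X S) n \<Longrightarrow> (\<lambda>i j. F i j x) \<in> mats S n"
  by (auto simp: mats_def intro: ell_inf_carrier_val)

lemma ell_inf_madd_mats:
  "F \<in> mats (ell_inf X S) n \<Longrightarrow> K \<in> mats (ell_inf X S) n \<Longrightarrow> madd (ell_inf X S) n F K \<in> mats (ell_inf X S) n"
  unfolding mats_def madd_def by (auto intro: ell_inf_add_closed)

lemma ell_inf_msmul_mats: "F \<in> mats (ell_inf X S) n \<Longrightarrow> msmul (ell_inf X S) n c F \<in> mats (ell_inf X S) n"
  unfolding mats_def msmul_def by (auto intro: ell_inf_smul_closed)

lemma ell_inf_meye_mats: "meye (ell_inf X S) n r \<in> mats (ell_inf X S) n"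
  unfolding mats_def meye_def
  using ell_inf_smul_closed[OF ell_inf_unit_closed[of X]] ell_inf_zero_closed[of X] by simp

lemma ell_inf_mconj_mats:
  assumes F: "F \<in> mats (ell_inf X S) n"
  shows "mconj (ell_inf X S) \<alpha> n m F \<in> mats (ell_inf X S) m"
  unfolding mats_def mconj_def
  using ell_inf_mats_in[OF F] ell_inf_zero_closed
  by (auto intro!: vsum_ell_inf_closed ell_inf_smul_closed)

lemma ell_inf_pos_selfadjoint:
  assumes n: "n > 0" and F: "F \<in> opos (ell_inf X S) n"
  shows "madj (ell_inf X S) n F = F"
proof (intro ext)
  fix i j x
  have Fm: "F \<in> mats (ell_inf X S) n" using F by (simp add: opos_ell_inf)
  show "madj (ell_inf X S) n F i j x = F i j x"
  proof (cases "i < n \<and> j < n \<and> x \<in> X")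
    case True
    then have "madj S n (\<lambda>i j. F i j x) i j = F i j x"
      using pos_selfadjoint[OF n] F by (simp add: opos_ell_inf)
    with True show ?thesis by (simp add: madj_def)
  next
    case False
    then show ?thesis
      using ell_inf_mats_out[OF Fm] ell_inf_carrier_out[OF ell_inf_mats_in[OF Fm]]
      by (auto simp: madj_def)
  qed
qed

lemma ell_inf_pos_antisym:
  assumes n: "n > 0" and F: "F \<in> opos (ell_inf X S) n"
    and negF: "msmul (ell_inf X S) n (-1) F \<in> opos (ell_inf X S) n"
  shows "F = mzero (ell_inf X S)"
proof (intro ext)
  fix i j x
  have Fm: "F \<in> mats (ell_inf X S) n" using F by (simp add: opos_ell_inf)
  show "F i j x = mzero (ell_inf X S) i j x"
  proof (cases "i < n \<and> j < n \<and> x \<in> X")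
    case True
    then have "(\<lambda>i j. F i j x) = mzero S"
      using pos_antisym[OF n] F negF by (simp add: opos_ell_inf ell_inf_eval_msmul)
    then show ?thesis by (simp add: mzero_def fun_eq_iff)
  next
    case False
    then show ?thesis
      using ell_inf_mats_out[OF Fm] ell_inf_carrier_out[OF ell_inf_mats_in[OF Fm]]
      by (cases "i < n \<and> j < n") (auto simp: mzero_def)
  qed
qed

lemma ell_inf_archimedean:
  assumes n: "n > 0" and F: "F \<in> mats (ell_inf X S) n" and sa: "madj (ell_inf X S) n F = F"
  shows "\<exists>r>0. madd (ell_inf X S) n (meye (ell_inf X S) n r) F \<in> opos (ell_inf X S) n"
proof -
  have "\<forall>i j. \<exists>r. i < n \<and> j < n \<longrightarrow> (\<forall>x\<in>X. bmat S r (F i j x) \<in> opos S 2)"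
    using ell_inf_carrier_bmat[OF ell_inf_mats_in[OF F]] by blast
  then obtain rr where rr: "\<And>i j x. i < n \<Longrightarrow> j < n \<Longrightarrow> x \<in> X \<Longrightarrow> bmat S (rr i j) (F i j x) \<in> opos S 2"
    by metis
  define R where "R = (\<Sum>i<n. \<Sum>j<n. \<bar>rr i j\<bar>)"
  have rrR: "rr i j \<le> R" if "i < n" "j < n" for i j
  proof -
    have "rr i j \<le> (\<Sum>j<n. \<bar>rr i j\<bar>)" using member_le_sum[of j "{..<n}" "\<lambda>j. \<bar>rr i j\<bar>"] that by simp
    also have "\<dots> \<le> R"
      unfolding R_def using that by (intro member_le_sum) (auto intro: sum_nonneg)
    finally show ?thesis .
  qed
  define r where "r = max (real n * R) 0 + 1"
  have "madd S n (meye S n r) (\<lambda>i j. F i j x) \<in> opos S n" if x: "x \<in> X" for x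
  proof (rule madd_meye_pos_mono[OF n ell_inf_mats_eval[OF F]])
    show "madd S n (meye S n (real n * R)) (\<lambda>i j. F i j x) \<in> opos S n"
    proof (rule meye_add_pos_of_bounded_entries[OF n ell_inf_mats_eval[OF F]])
      show "madj S n (\<lambda>i j. F i j x) = (\<lambda>i j. F i j x)"
        using ell_inf_eval_madj[of X S n F x] sa by simp
      fix i j assume ij: "i < n" "j < n"
      show "bmat S R (F i j x) \<in> opos S 2"
        using bmat_mono[OF ell_inf_carrier_val[OF ell_inf_mats_in[OF F ij]] rr[OF ij x] rrR[OF ij]] .
    qed
  qed (simp add: r_def)
  then have "madd (ell_inf X S) n (meye (ell_inf X S) n r) F \<in> opos (ell_inf X S) n"
    using ell_inf_madd_mats[OF ell_inf_meye_mats F]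
    by (simp add: opos_ell_inf ell_inf_eval_madd ell_inf_eval_meye)
  moreover have "r > 0" by (simp add: r_def)
  ultimately show ?thesis by blast
qed

lemma ell_inf_pos_closed:
  assumes n: "n > 0" and F: "F \<in> mats (ell_inf X S) n" and sa: "madj (ell_inf X S) n F = F"
    and pos: "\<forall>r>0. madd (ell_inf X S) n (meye (ell_inf X S) n r) F \<in> opos (ell_inf X S) n"
  shows "F \<in> opos (ell_inf X S) n"
proof -
  have "(\<lambda>i j. F i j x) \<in> opos S n" if x: "x \<in> X" for x
  proof (rule pos_closed[OF n ell_inf_mats_eval[OF F]])
    show "madj S n (\<lambda>i j. F i j x) = (\<lambda>i j. F i j x)"
      using ell_inf_eval_madj[of X S n F x] sa by simp
    show "\<forall>r>0. madd S n (meye S n r) (\<lambda>i j. F i j x) \<in> opos S n"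
      using pos x by (simp add: opos_ell_inf ell_inf_eval_madd ell_inf_eval_meye)
  qed
  then show ?thesis using F by (simp add: opos_ell_inf)
qed

lemma osys_ell_inf: "osys (ell_inf X S)"
  unfolding osys_def operator_system_def ell_inf_simps
proof (intro conjI allI impI ballI)
  fix n :: nat assume n: "n > 0"
  show "opos (ell_inf X S) n \<subseteq> mats (ell_inf X S) n" by (auto simp: opos_ell_inf)
  fix F assume F: "F \<in> opos (ell_inf X S) n"
  show "madj (ell_inf X S) n F = F" by (rule ell_inf_pos_selfadjoint[OF n F])
  show "msmul (ell_inf X S) n (-1) F \<in> opos (ell_inf X S) n \<Longrightarrow> F = mzero (ell_inf X S)"
    by (rule ell_inf_pos_antisym[OF n F])
  show "madd (ell_inf X S) n F K \<in> opos (ell_inf X S) n" if "K \<in> opos (ell_inf X S) n" for K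
    using F that pos_add[OF n]
    by (auto simp: opos_ell_inf ell_inf_eval_madd intro!: ell_inf_madd_mats)
  show "msmul (ell_inf X S) n (complex_of_real r) F \<in> opos (ell_inf X S) n" if "r \<ge> 0" for r
    using F that pos_smul[OF n]
    by (auto simp: opos_ell_inf ell_inf_eval_msmul intro!: ell_inf_msmul_mats)
  show "mconj (ell_inf X S) \<alpha> n m F \<in> opos (ell_inf X S) m" if "m > 0" for m \<alpha>
    using F pos_mconj[OF n that]
    by (auto simp: opos_ell_inf ell_inf_eval_mconj intro!: ell_inf_mconj_mats)
next
  fix n :: nat and F assume "n > 0" "F \<in> mats (ell_inf X S) n" "madj (ell_inf X S) n F = F"
  then show "\<exists>r>0. madd (ell_inf X S) n (meye (ell_inf X S) n r) F \<in> opos (ell_inf X S) n"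
    and "\<forall>r>0. madd (ell_inf X S) n (meye (ell_inf X S) n r) F \<in> opos (ell_inf X S) n
      \<Longrightarrow> F \<in> opos (ell_inf X S) n"
    by (simp_all add: ell_inf_archimedean ell_inf_pos_closed)
qed (auto intro!: ext intro: add_commute simp: ell_inf_zero_closed ell_inf_unit_closed ell_inf_add_closed
    ell_inf_smul_closed ell_inf_adj_closed ell_inf_carrier_val add_assoc add_neg
    smul_add_left smul_add_right adj_add adj_smul)

end

section \<open>Cosets, cross-sections and the cocycle\<close>

locale cross_section = group G for G :: "('g, 'm) monoid_scheme" (structure) +
  fixes H :: "'g set" and \<pi> :: "'g set \<Rightarrow> 'g"
  assumes subgroup_H: "subgroup H G"
    and section_mem: "\<forall>x\<in>lcosets H. \<pi> x \<in> x"
    and section_base: "\<pi> H = \<one>"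
begin

lemma subgroup_subset: "H \<subseteq> carrier G"
  using subgroup_H subgroup.subset by blast

lemma lcosets_subset: "x \<in> lcosets H \<Longrightarrow> x \<subseteq> carrier G"
  using subgroup.lcosets_carrier[OF subgroup_H is_group] by blast

lemma lcosets_mult_closed: "x \<in> lcosets H \<Longrightarrow> g \<in> carrier G \<Longrightarrow> g <# x \<in> lcosets H"
  unfolding LCOSETS_def using lcos_m_assoc[OF subgroup_subset] by auto

lemma lcosets_one_mult: "x \<in> lcosets H \<Longrightarrow> \<one> <# x = x"
  using lcos_mult_one lcosets_subset by blast

lemma lcosets_mult_assoc:
  "x \<in> lcosets H \<Longrightarrow> g \<in> carrier G \<Longrightarrow> k \<in> carrier G \<Longrightarrow> (g \<otimes> k) <# x = g <# (k <# x)"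
  using lcos_m_assoc lcosets_subset by simp

lemma lcosets_inv_mult_cancel: "x \<in> lcosets H \<Longrightarrow> g \<in> carrier G \<Longrightarrow> inv g <# (g <# x) = x"
  using lcosets_mult_assoc[of x "inv g" g] lcosets_one_mult by simp

lemma lcosets_mult_inv_cancel: "x \<in> lcosets H \<Longrightarrow> g \<in> carrier G \<Longrightarrow> g <# (inv g <# x) = x"
  using lcosets_mult_assoc[of x g "inv g"] lcosets_one_mult by simp

lemma subgroup_in_lcosets: "H \<in> lcosets H"
  unfolding LCOSETS_def using lcos_mult_one[OF subgroup_subset] by force

lemma subgroup_lcoset_eq: "h \<in> H \<Longrightarrow> h <# H = H"
  using l_repr_independence[of h \<one> H] subgroup_H lcos_mult_one[OF subgroup_subset] by simp

lemma section_closed: "x \<in> lcosets H \<Longrightarrow> \<pi> x \<in> carrier G"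
  using section_mem lcosets_subset by blast

lemma section_lcoset: assumes x: "x \<in> lcosets H" shows "\<pi> x <# H = x"
proof -
  obtain a where a: "a \<in> carrier G" "x = a <# H" using x by (auto simp: LCOSETS_def)
  have "\<pi> x \<in> a <# H" using section_mem x a by auto
  thus ?thesis using l_repr_independence[OF _ a(1) subgroup_H] a by simp
qed

lemma inv_section_lcoset: "x \<in> lcosets H \<Longrightarrow> inv (\<pi> x) <# x = H"
  using lcosets_inv_mult_cancel[OF subgroup_in_lcosets section_closed] section_lcoset by metis

lemma cocycle_in_subgroup:
  assumes x: "x \<in> lcosets H" and g: "g \<in> carrier G"
  shows "cocycle G \<pi> x g \<in> H"
proof -
  have gx: "g <# x \<in> lcosets H" by (rule lcosets_mult_closed[OF x g])
  have "g <# x = (g \<otimes> \<pi> x) <# H"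
    using section_lcoset[OF x] lcosets_mult_assoc[OF subgroup_in_lcosets g section_closed[OF x]] by simp
  then have "\<pi> (g <# x) \<in> (g \<otimes> \<pi> x) <# H" using section_mem gx by metis
  then have "inv (g \<otimes> \<pi> x) \<otimes> \<pi> (g <# x) \<in> H"
    by (rule subgroup.lcos_module_imp[OF subgroup_H is_group m_closed[OF g section_closed[OF x]]])
  then have "inv (inv (g \<otimes> \<pi> x) \<otimes> \<pi> (g <# x)) \<in> H" by (rule subgroup.m_inv_closed[OF subgroup_H])
  moreover have "inv (inv (g \<otimes> \<pi> x) \<otimes> \<pi> (g <# x)) = cocycle G \<pi> x g"
    using g section_closed[OF x] section_closed[OF gx] by (simp add: cocycle_def inv_mult_group m_assoc)
  ultimately show ?thesis by simp
qed

lemma cocycle_mult: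
  assumes y: "y \<in> lcosets H" and g: "g \<in> carrier G" and k: "k \<in> carrier G"
  shows "cocycle G \<pi> (k <# y) g \<otimes> cocycle G \<pi> y k = cocycle G \<pi> y (g \<otimes> k)"
proof -
  have ky: "k <# y \<in> lcosets H" by (rule lcosets_mult_closed[OF y k])
  have gky: "g <# (k <# y) \<in> lcosets H" by (rule lcosets_mult_closed[OF ky g])
  note closed = section_closed[OF y] section_closed[OF ky] section_closed[OF gky] g k
  have cancel: "\<And>a z. a \<in> carrier G \<Longrightarrow> z \<in> carrier G \<Longrightarrow> a \<otimes> (inv a \<otimes> z) = z"
    by (simp add: m_assoc[symmetric])
  have "cocycle G \<pi> (k <# y) g \<otimes> cocycle G \<pi> y k
      = inv \<pi> (g <# (k <# y)) \<otimes> g \<otimes> (\<pi> (k <# y) \<otimes> inv \<pi> (k <# y)) \<otimes> k \<otimes> \<pi> y"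
    using closed by (simp add: cocycle_def m_assoc cancel)
  also have "\<dots> = inv \<pi> (g <# (k <# y)) \<otimes> (g \<otimes> k) \<otimes> \<pi> y" using closed by (simp add: m_assoc)
  also have "\<dots> = cocycle G \<pi> y (g \<otimes> k)" using lcosets_mult_assoc[OF y g k] by (simp add: cocycle_def)
  finally show ?thesis .
qed

lemma cocycle_one: "x \<in> lcosets H \<Longrightarrow> cocycle G \<pi> x \<one> = \<one>"
  using lcosets_one_mult section_closed by (simp add: cocycle_def)

lemma cocycle_base: "h \<in> H \<Longrightarrow> cocycle G \<pi> H h = h"
  using subgroup_lcoset_eq section_base subgroup_subset by (auto simp: cocycle_def)

lemma cocycle_inv_section: "x \<in> lcosets H \<Longrightarrow> cocycle G \<pi> x (inv (\<pi> x)) = \<one>"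
  using inv_section_lcoset section_base section_closed by (simp add: cocycle_def)

end

locale induced_system = cross_section +
  fixes V :: "'v opsys" and actV :: "'g \<Rightarrow> 'v \<Rightarrow> 'v"
  assumes subgroup_action: "G_opsys (G\<lparr>carrier := H\<rparr>) V actV"
begin

sublocale V: osys V
  using subgroup_action by (rule G_opsys_osys)

abbreviation L :: "('g set \<Rightarrow> 'v) opsys" where "L \<equiv> ell_inf (lcosets H) V"
abbreviation ind :: "'g \<Rightarrow> ('g set \<Rightarrow> 'v) \<Rightarrow> 'g set \<Rightarrow> 'v" where "ind \<equiv> ind_act G H \<pi> V actV"

lemma act_ucp: "h \<in> H \<Longrightarrow> ucp V V (actV h)"
  using G_opsys_ucp[OF subgroup_action] by simp

lemma act_one: "v \<in> ocarrier V \<Longrightarrow> actV \<one> v = v"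
  using G_opsys_one[OF subgroup_action] by simp

lemma act_mult: "h \<in> H \<Longrightarrow> k \<in> H \<Longrightarrow> v \<in> ocarrier V \<Longrightarrow> actV (h \<otimes> k) v = actV h (actV k v)"
  using G_opsys_mult[OF subgroup_action] by simp

lemma ind_in: "x \<in> lcosets H \<Longrightarrow> ind g f x = actV (cocycle G \<pi> (inv g <# x) g) (f (inv g <# x))"
  by (simp add: ind_act_def)

lemma ind_out: "x \<notin> lcosets H \<Longrightarrow> ind g f x = ozero V"
  by (simp add: ind_act_def)

lemma inv_mult_lcosets: "g \<in> carrier G \<Longrightarrow> x \<in> lcosets H \<Longrightarrow> inv g <# x \<in> lcosets H"
  using lcosets_mult_closed by simp

lemma ind_cocycle_in_subgroup: "g \<in> carrier G \<Longrightarrow> x \<in> lcosets H \<Longrightarrow> cocycle G \<pi> (inv g <# x) g \<in> H"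
  using cocycle_in_subgroup inv_mult_lcosets by simp

lemma ind_closed:
  assumes g: "g \<in> carrier G" and f: "f \<in> ell_inf_carrier (lcosets H) V"
  shows "ind g f \<in> ell_inf_carrier (lcosets H) V"
proof -
  obtain r where r: "\<forall>x\<in>lcosets H. bmat V r (f x) \<in> opos V 2"
    using V.ell_inf_carrier_bmat[OF f] by blast
  have "\<forall>x\<in>lcosets H. bmat V r (ind g f x) \<in> opos V 2"
    using ucp_bmat[OF V.osys_axioms V.osys_axioms act_ucp[OF ind_cocycle_in_subgroup[OF g]]
        V.ell_inf_carrier_val[OF f]] r inv_mult_lcosets[OF g]
    by (simp add: ind_in)
  then show ?thesis
    using ucp_closed[OF act_ucp[OF ind_cocycle_in_subgroup[OF g]] V.ell_inf_carrier_val[OF f]]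
    by (intro V.ell_inf_carrierI[where r = r]) (auto simp: ind_in ind_out)
qed

lemma ind_add:
  assumes g: "g \<in> carrier G" and f1: "f1 \<in> ell_inf_carrier (lcosets H) V"
    and f2: "f2 \<in> ell_inf_carrier (lcosets H) V"
  shows "ind g (oadd L f1 f2) = oadd L (ind g f1) (ind g f2)"
  using ucp_add[OF act_ucp[OF ind_cocycle_in_subgroup[OF g]]]
    V.ell_inf_carrier_val[OF f1] V.ell_inf_carrier_val[OF f2]
  by (auto simp: fun_eq_iff ind_act_def)

lemma ind_smul:
  assumes g: "g \<in> carrier G" and f: "f \<in> ell_inf_carrier (lcosets H) V"
  shows "ind g (osmul L c f) = osmul L c (ind g f)"
  using ucp_smul[OF act_ucp[OF ind_cocycle_in_subgroup[OF g]]] V.ell_inf_carrier_val[OF f]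
  by (auto simp: fun_eq_iff ind_act_def)

lemma ind_unit: "g \<in> carrier G \<Longrightarrow> ind g (ounit L) = ounit L"
  using ucp_unit[OF act_ucp[OF ind_cocycle_in_subgroup]] inv_mult_lcosets
  by (auto simp: fun_eq_iff ind_act_def)

lemma ind_pos:
  assumes g: "g \<in> carrier G" and n: "n > 0" and F: "F \<in> opos L n"
  shows "mmap L n (ind g) F \<in> opos L n"
proof -
  have Fm: "F \<in> mats L n" using F by (simp add: opos_ell_inf)
  have "mmap L n (ind g) F \<in> mats L n"
    using ind_closed[OF g ell_inf_mats_in[OF Fm]] V.ell_inf_zero_closed
    by (auto simp: mats_def mmap_def)
  moreover have "(\<lambda>i j. mmap L n (ind g) F i j x) \<in> opos V n" if x: "x \<in> lcosets H" for x
  proof -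
    have "(\<lambda>i j. mmap L n (ind g) F i j x)
        = mmap V n (actV (cocycle G \<pi> (inv g <# x) g)) (\<lambda>i j. F i j (inv g <# x))"
      using x by (intro ext) (simp add: mmap_def ind_in)
    moreover have "(\<lambda>i j. F i j (inv g <# x)) \<in> opos V n"
      using F inv_mult_lcosets[OF g x] by (simp add: opos_ell_inf)
    ultimately show ?thesis using ucp_pos[OF act_ucp[OF ind_cocycle_in_subgroup[OF g x]] n] by simp
  qed
  ultimately show ?thesis by (simp add: opos_ell_inf)
qed

lemma ind_ucp: "g \<in> carrier G \<Longrightarrow> ucp L L (ind g)"
  unfolding ucp_def using ind_closed ind_add ind_smul ind_unit ind_pos by simp

lemma ind_one: assumes f: "f \<in> ell_inf_carrier (lcosets H) V" shows "ind \<one> f = f"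
proof (intro ext)
  fix x show "ind \<one> f x = f x"
    using lcosets_one_mult cocycle_one act_one V.ell_inf_carrier_val[OF f] V.ell_inf_carrier_out[OF f]
    by (cases "x \<in> lcosets H") (simp_all add: ind_in ind_out)
qed

lemma ind_mult:
  assumes g: "g \<in> carrier G" and k: "k \<in> carrier G" and f: "f \<in> ell_inf_carrier (lcosets H) V"
  shows "ind (g \<otimes> k) f = ind g (ind k f)"
proof (intro ext)
  fix x show "ind (g \<otimes> k) f x = ind g (ind k f) x"
  proof (cases "x \<in> lcosets H")
    case x: True
    define y where "y = inv (g \<otimes> k) <# x"
    define z where "z = inv g <# x"
    have z: "z \<in> lcosets H" using inv_mult_lcosets[OF g x] by (simp add: z_def)
    have y: "y \<in> lcosets H" using inv_mult_lcosets[OF m_closed[OF g k] x] by (simp add: y_def)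
    have yz: "inv k <# z = y"
      using lcosets_mult_assoc[OF x inv_closed[OF k] inv_closed[OF g]] g k
      by (simp add: y_def z_def inv_mult_group)
    have zy: "k <# y = z" using lcosets_mult_inv_cancel[OF z k] yz by simp
    have "ind g (ind k f) x = actV (cocycle G \<pi> z g) (actV (cocycle G \<pi> y k) (f y))"
      using x z by (simp add: ind_in z_def[symmetric] yz)
    also have "\<dots> = actV (cocycle G \<pi> z g \<otimes> cocycle G \<pi> y k) (f y)"
      using act_mult[OF cocycle_in_subgroup[OF z g] cocycle_in_subgroup[OF y k]
          V.ell_inf_carrier_val[OF f]] by simp
    also have "cocycle G \<pi> z g \<otimes> cocycle G \<pi> y k = cocycle G \<pi> y (g \<otimes> k)"
      using cocycle_mult[OF y g k] zy by simp
    finally show ?thesis using x by (simp add: ind_in y_def)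
  qed (simp add: ind_out)
qed

lemma G_opsys_ind: "G_opsys G L ind"
  unfolding G_opsys_def
  using V.osys_ell_inf[unfolded osys_def] ind_ucp ind_one ind_mult by simp

section \<open>Frobenius reciprocity\<close>

definition induced_map :: "('g \<Rightarrow> 'w \<Rightarrow> 'w) \<Rightarrow> ('w \<Rightarrow> 'v) \<Rightarrow> 'w \<Rightarrow> 'g set \<Rightarrow> 'v" where
  "induced_map act \<psi> w = (\<lambda>x. if x \<in> lcosets H then \<psi> (act (inv (\<pi> x)) w) else ozero V)"

lemma induced_map_closed:
  assumes W: "G_opsys G W act" and \<psi>: "ucp W V \<psi>" and w: "w \<in> ocarrier W"
  shows "induced_map act \<psi> w \<in> ell_inf_carrier (lcosets H) V"
proof -
  have W_osys: "osys W" by (rule G_opsys_osys[OF W])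
  have act: "x \<in> lcosets H \<Longrightarrow> ucp W W (act (inv (\<pi> x)))" for x
    using G_opsys_ucp[OF W] section_closed by simp
  obtain R where R: "bmat W R w \<in> opos W 2" using osys.bmat_exists[OF W_osys w] by blast
  have "bmat V R (\<psi> (act (inv (\<pi> x)) w)) \<in> opos V 2" if x: "x \<in> lcosets H" for x
    using ucp_bmat[OF W_osys V.osys_axioms \<psi> ucp_closed[OF act[OF x] w]
        ucp_bmat[OF W_osys W_osys act[OF x] w R]] .
  then show ?thesis
    using ucp_closed[OF \<psi> ucp_closed[OF act w]]
    by (intro V.ell_inf_carrierI[where r = R]) (auto simp: induced_map_def)
qed

lemma induced_map_ucp:
  assumes W: "G_opsys G W act" and \<psi>: "ucp W V \<psi>"
  shows "ucp W L (induced_map act \<psi>)"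
  unfolding ucp_def ell_inf_simps
proof (intro conjI ballI allI impI)
  have act: "x \<in> lcosets H \<Longrightarrow> ucp W W (act (inv (\<pi> x)))" for x
    using G_opsys_ucp[OF W] section_closed by simp
  show "induced_map act \<psi> w \<in> ell_inf_carrier (lcosets H) V" if "w \<in> ocarrier W" for w
    by (rule induced_map_closed[OF W \<psi> that])
  show "induced_map act \<psi> (oadd W v w) = (\<lambda>x. oadd V (induced_map act \<psi> v x) (induced_map act \<psi> w x))"
    if "v \<in> ocarrier W" "w \<in> ocarrier W" for v w
    using that ucp_add[OF act] ucp_add[OF \<psi>] ucp_closed[OF act]
    by (auto simp: fun_eq_iff induced_map_def)
  show "induced_map act \<psi> (osmul W c w) = (\<lambda>x. osmul V c (induced_map act \<psi> w x))"
    if "w \<in> ocarrier W" for c w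
    using that ucp_smul[OF act] ucp_smul[OF \<psi>] ucp_closed[OF act]
    by (auto simp: fun_eq_iff induced_map_def)
  show "induced_map act \<psi> (ounit W) = (\<lambda>x. if x \<in> lcosets H then ounit V else ozero V)"
    using ucp_unit[OF act] ucp_unit[OF \<psi>] by (auto simp: fun_eq_iff induced_map_def)
  fix n :: nat and X assume n: "n > 0" and X: "X \<in> opos W n"
  have "mmap L n (induced_map act \<psi>) X \<in> mats L n"
    using induced_map_closed[OF W \<psi> osys.pos_in_carrier[OF G_opsys_osys[OF W] X]]
      V.ell_inf_zero_closed
    by (auto simp: mats_def mmap_def)
  moreover have "(\<lambda>i j. mmap L n (induced_map act \<psi>) X i j x) \<in> opos V n" if x: "x \<in> lcosets H" for x
  proof -
    have "(\<lambda>i j. mmap L n (induced_map act \<psi>) X i j x) = mmap V n \<psi> (mmap W n (act (inv (\<pi> x))) X)"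
      using x by (intro ext) (simp add: mmap_def induced_map_def)
    then show ?thesis using ucp_pos[OF \<psi> n ucp_pos[OF act[OF x] n X]] by simp
  qed
  ultimately show "mmap L n (induced_map act \<psi>) X \<in> opos L n" by (simp add: opos_ell_inf)
qed

lemma induced_map_equivariant:
  assumes W: "G_opsys G W act" and \<psi>: "equivariant (G\<lparr>carrier := H\<rparr>) W act actV \<psi>"
  shows "equivariant G W act ind (induced_map act \<psi>)"
  unfolding equivariant_def
proof (intro ballI ext)
  fix g w x assume g: "g \<in> carrier G" and w: "w \<in> ocarrier W"
  have act_closed: "k \<in> carrier G \<Longrightarrow> act k w \<in> ocarrier W" for k
    using ucp_closed[OF G_opsys_ucp[OF W] w] by simp
  show "induced_map act \<psi> (act g w) x = ind g (induced_map act \<psi> w) x"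
  proof (cases "x \<in> lcosets H")
    case x: True
    define y where "y = inv g <# x"
    have y: "y \<in> lcosets H" using inv_mult_lcosets[OF g x] by (simp add: y_def)
    have gy: "g <# y = x" using lcosets_mult_inv_cancel[OF x g] by (simp add: y_def)
    define h where "h = cocycle G \<pi> y g"
    have h: "h \<in> H" using cocycle_in_subgroup[OF y g] by (simp add: h_def)
    have "h \<otimes> inv (\<pi> y) = inv (\<pi> x) \<otimes> g"
      using gy section_closed[OF y] section_closed[OF x] g by (simp add: h_def cocycle_def m_assoc)
    then have "act h (act (inv (\<pi> y)) w) = act (inv (\<pi> x) \<otimes> g) w"
      using G_opsys_mult[OF W _ _ w] h subgroup_subset section_closed[OF y] by (metis inv_closed subsetD)
    also have "\<dots> = act (inv (\<pi> x)) (act g w)"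
      using G_opsys_mult[OF W _ g w] section_closed[OF x] by simp
    finally have "induced_map act \<psi> (act g w) x = \<psi> (act h (act (inv (\<pi> y)) w))"
      using x by (simp add: induced_map_def)
    also have "\<dots> = actV h (\<psi> (act (inv (\<pi> y)) w))"
      using \<psi> h act_closed section_closed[OF y] by (simp add: equivariant_def)
    also have "\<dots> = ind g (induced_map act \<psi> w) x"
      using x y by (simp add: ind_in y_def[symmetric] h_def induced_map_def)
    finally show ?thesis .
  qed (simp add: induced_map_def ind_out)
qed

lemma base_component_ucp:
  assumes \<phi>: "ucp W L \<phi>"
  shows "ucp W V (\<lambda>w. \<phi> w H)"
  unfolding ucp_def
proof (intro conjI ballI allI impI)
  show "\<phi> w H \<in> ocarrier V" if "w \<in> ocarrier W" for w
    using V.ell_inf_carrier_val ucp_closed[OF \<phi> that] by simp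
  show "\<phi> (oadd W v w) H = oadd V (\<phi> v H) (\<phi> w H)" if "v \<in> ocarrier W" "w \<in> ocarrier W" for v w
    using ucp_add[OF \<phi> that] by simp
  show "\<phi> (osmul W c w) H = osmul V c (\<phi> w H)" if "w \<in> ocarrier W" for c w
    using ucp_smul[OF \<phi> that] by simp
  show "\<phi> (ounit W) H = ounit V"
    using ucp_unit[OF \<phi>] subgroup_in_lcosets by simp
  fix n :: nat and X assume n: "n > 0" and X: "X \<in> opos W n"
  have "(\<lambda>i j. mmap L n \<phi> X i j H) \<in> opos V n"
    using ucp_pos[OF \<phi> n X] subgroup_in_lcosets by (simp add: opos_ell_inf)
  moreover have "(\<lambda>i j. mmap L n \<phi> X i j H) = mmap V n (\<lambda>w. \<phi> w H) X"
    by (intro ext) (simp add: mmap_def)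
  ultimately show "mmap V n (\<lambda>w. \<phi> w H) X \<in> opos V n" by simp
qed

lemma base_component_equivariant:
  assumes \<phi>: "equivariant G W act ind \<phi>"
  shows "equivariant (G\<lparr>carrier := H\<rparr>) W act actV (\<lambda>w. \<phi> w H)"
  unfolding equivariant_def
proof (intro ballI)
  fix h w assume "h \<in> carrier (G\<lparr>carrier := H\<rparr>)" and w: "w \<in> ocarrier W"
  then have h: "h \<in> H" by simp
  have "inv h <# H = H"
    using subgroup_lcoset_eq subgroup.m_inv_closed[OF subgroup_H h] by simp
  then show "\<phi> (act h w) H = actV h (\<phi> w H)"
    using \<phi> h subgroup_subset w subgroup_in_lcosets cocycle_base[OF h]
    by (auto simp: equivariant_def ind_in)
qed

lemma induced_map_base_component:
  assumes W: "G_opsys G W act" and \<phi>: "ucp W L \<phi>" and eq: "equivariant G W act ind \<phi>"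
    and w: "w \<in> ocarrier W"
  shows "induced_map act (\<lambda>w. \<phi> w H) w = \<phi> w"
proof (intro ext)
  fix x show "induced_map act (\<lambda>w. \<phi> w H) w x = \<phi> w x"
  proof (cases "x \<in> lcosets H")
    case x: True
    have "\<phi> (act (inv (\<pi> x)) w) H = ind (inv (\<pi> x)) (\<phi> w) H"
      using eq section_closed[OF x] w by (simp add: equivariant_def)
    also have "\<dots> = actV (cocycle G \<pi> x (inv (\<pi> x))) (\<phi> w x)"
      using subgroup_in_lcosets section_closed[OF x] section_lcoset[OF x] by (simp add: ind_in)
    also have "\<dots> = \<phi> w x"
      using cocycle_inv_section[OF x] act_one[OF V.ell_inf_carrier_val[OF ucp_closed[OF \<phi> w, unfolded ell_inf_simps]]]
      by simp
    finally show ?thesis using x by (simp add: induced_map_def)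
  next
    case False
    then show ?thesis
      using V.ell_inf_carrier_out[OF ucp_closed[OF \<phi> w, unfolded ell_inf_simps]]
      by (simp add: induced_map_def)
  qed
qed

lemma induced_map_cong:
  assumes W: "G_opsys G W act" and w: "w \<in> ocarrier W"
    and eq: "\<And>v. v \<in> ocarrier W \<Longrightarrow> \<psi> v = \<psi>' v"
  shows "induced_map act \<psi> w = induced_map act \<psi>' w"
  using eq ucp_closed[OF G_opsys_ucp[OF W] w] section_closed by (simp add: fun_eq_iff induced_map_def)

end

theorem lemma3p10:
  fixes G :: "('g, 'm) monoid_scheme" and H :: "'g set"
    and V :: "'v opsys" and actV :: "'g \<Rightarrow> 'v \<Rightarrow> 'v"
    and \<pi> :: "'g set \<Rightarrow> 'g"
  assumes "group G"
    and "subgroup H G"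
    and "G_injective (G\<lparr>carrier := H\<rparr>) V actV TYPE('w)"
    and "\<forall>x\<in>lcosets\<^bsub>G\<^esub> H. \<pi> x \<in> x"
    and "\<pi> H = \<one>\<^bsub>G\<^esub>"
  shows "G_injective G (linf G H V) (ind_act G H \<pi> V actV) TYPE('w)"
proof -
  have "G_opsys (G\<lparr>carrier := H\<rparr>) V actV" using assms(3) by (simp add: G_injective_def)
  with assms(1,2,4,5) interpret induced_system G H \<pi> V actV
    by (simp add: induced_system_def induced_system_axioms_def cross_section_def cross_section_axioms_def)
  show ?thesis
    unfolding G_injective_def linf_eq_ell_inf
  proof (intro conjI allI impI; (elim conjE)?)
    show "G_opsys G L ind" by (rule G_opsys_ind)
    fix W1 W2 :: "'w opsys" and act \<phi>
    assume W1: "G_opsys G W1 act" and W2: "G_opsys G W2 act" and sub: "subsystem W1 W2"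
      and \<phi>: "ucp W1 L \<phi>" and eq: "equivariant G W1 act ind \<phi>"
    obtain \<psi> where \<psi>: "ucp W2 V \<psi>" "equivariant (G\<lparr>carrier := H\<rparr>) W2 act actV \<psi>"
      and extends: "\<forall>w\<in>ocarrier W1. \<psi> w = \<phi> w H"
      using assms(3) G_opsys_restrict[OF W1 subgroup_subset] G_opsys_restrict[OF W2 subgroup_subset] sub
        base_component_ucp[OF \<phi>] base_component_equivariant[OF eq]
      unfolding G_injective_def by blast
    have "induced_map act \<psi> w = \<phi> w" if w: "w \<in> ocarrier W1" for w
    proof -
      have "induced_map act \<psi> w = induced_map act (\<lambda>w. \<phi> w H) w"
        by (rule induced_map_cong[OF W1 w]) (simp add: extends)
      also have "\<dots> = \<phi> w" by (rule induced_map_base_component[OF W1 \<phi> eq w])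
      finally show ?thesis .
    qed
    then show "\<exists>\<psi>. ucp W2 L \<psi> \<and> equivariant G W2 act ind \<psi> \<and> (\<forall>w\<in>ocarrier W1. \<psi> w = \<phi> w)"
      using induced_map_ucp[OF W2 \<psi>(1)] induced_map_equivariant[OF W2 \<psi>(2)] by blast
  qed
qed

end
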